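(* Let $D\in\mathbb{N}$, let $\mathcal{X}\subset\mathbb{R}^D$ be compact, set $d_0(x,y)=|x-y|\wedge1$ for $x,y\in\mathcal{X}$, and let $1\le p<\infty$. Define $f:\mathfrak{N}\to[0,1]$ by $$f(\xi)=\Big(\frac1n\sum_{i=1}^n\min_{j\in\{1,\dots,n\},\,j\ne i}d_0(x_i,x_j)^p\Big)^{1/p}$$ for $\xi=\sum_{i=1}^n\delta_{x_i}$ with $n\ge2$, and $f(\xi)=0$ if $|\xi|<2$. Then $f$ is Lipschitz continuous with respect to $d_1^{(p)}$, with Lipschitz constant $\tau_D+1$ if $p=1$ and $2(2\tau_D+1)^{1/p}$ for general $p$.
   Context: $|\cdot|$ is the Euclidean norm; $\mathfrak{N}$ is the space of finite point measures on $\mathcal{X}$ and $|\xi|$ the total mass of $\xi$. $\Pi_n$ is the set of permutations of $\{1,\dots,n\}$. For $\xi=\sum_{i=1}^{|\xi|}\delta_{x_i}$, $\eta=\sum_{i=1}^{|\eta|}\delta_{y_i}$: $d_1^{(p)}(\xi,\eta)=\min_{\pi\in\Pi_n}\big(\frac1n\sum_{i=1}^n d_0(x_i,y_{\pi(i)})^p\big)^{1/p}$ if $|\xi|=|\eta|=n\ge1$, $=1$ if $|\xi|\ne|\eta|$, $=0$ if $|\xi|=|\eta|=0$. $\tau_D$ is the kissing number in dimension $D$: the maximal number of unit balls in $(\mathbb{R}^D,|\cdot|)$ that can touch a given unit ball without overlapping interiors. *)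

theory Defs
  imports "HOL-Analysis.Analysis" "HOL-Library.Multiset"
begin

definition kissing_number :: "'a::euclidean_space itself \<Rightarrow> nat" where
  "kissing_number _ = (GREATEST k. \<exists>C::'a set. finite C \<and> card C = k \<and>
      (\<forall>c\<in>C. cball c 1 \<inter> cball 0 1 \<noteq> {} \<and> ball c 1 \<inter> ball 0 1 = {}) \<and>
      (\<forall>c\<in>C. \<forall>c'\<in>C. c \<noteq> c' \<longrightarrow> ball c 1 \<inter> ball c' 1 = {}))"

definition d0 :: "'a::real_normed_vector \<Rightarrow> 'a \<Rightarrow> real" where
  "d0 x y = min (norm (x - y)) 1"

text \<open>Finite point measures are represented as multisets of points.
  d_1^(p): minimum over all matchings. Enumerating xi and eta as lists xs, ys
  (in all possible orders) and pairing xs!i with ys!i covers exactly all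
  permutations pi in the paper's definition.\<close>
definition d1 :: "real \<Rightarrow> 'a::real_normed_vector multiset \<Rightarrow> 'a multiset \<Rightarrow> real" where
  "d1 p \<xi> \<eta> =
     (if size \<xi> \<noteq> size \<eta> then 1
      else if size \<xi> = 0 then 0
      else Min {((1 / real (size \<xi>)) * (\<Sum>i<size \<xi>. d0 (xs ! i) (ys ! i) powr p)) powr (1 / p)
                 | xs ys. mset xs = \<xi> \<and> mset ys = \<eta>})"

definition nn_stat :: "real \<Rightarrow> 'a::real_normed_vector multiset \<Rightarrow> real" where
  "nn_stat p \<xi> =
     (if size \<xi> < 2 then 0
      else ((1 / real (size \<xi>)) *
             (\<Sum>x\<in>#\<xi>. Min ((\<lambda>y. d0 x y powr p) ` set_mset (\<xi> - {#x#})))) powr (1 / p))"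

end

theory Submission
  imports Defs "HOL-Combinatorics.Multiset_Permutations"
begin

text \<open>
  Match \<open>\<xi>\<close> and \<open>\<eta>\<close> optimally as \<open>x\<^sub>i \<leftrightarrow> y\<^sub>i\<close> and put \<open>\<delta>\<^sub>i = d\<^sub>0(x\<^sub>i, y\<^sub>i)\<close>.
  If \<open>y\<^sub>k\<close> is a nearest neighbour of \<open>y\<^sub>i\<close>, the triangle inequality gives
  \<open>nn(x\<^sub>i) \<le> nn(y\<^sub>i) + \<delta>\<^sub>i + \<delta>\<^sub>k\<close>, so by Minkowski's inequality
  \<open>f(\<xi>) \<le> f(\<eta>) + d\<^sub>1(\<xi>, \<eta>) + M\<^sub>p(g)\<close> with \<open>g\<^sub>i = \<delta>\<^sub>k\<close>.
  A point \<open>y\<^sub>k\<close> is the nearest neighbour of at most \<open>\<tau>\<^sub>D\<close> points at other positions within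
  distance \<open>< 1\<close>: seen from \<open>y\<^sub>k\<close>, their directions are pairwise at least 60 degrees apart, so the
  rescaled directions form a kissing configuration. Averaging \<open>g\<^sub>i\<close> over all nearest neighbours
  of \<open>y\<^sub>i\<close> (which also takes care of repeated points) gives \<open>\<Sum> g\<^sub>i\<^sup>p \<le> \<tau>\<^sub>D \<Sum> \<delta>\<^sub>k\<^sup>p\<close>, hence
  the Lipschitz constant \<open>1 + \<tau>\<^sub>D\<^bsup>1/p\<^esup>\<close>, which is below both stated constants.
\<close>

section \<open>Kissing configurations\<close>

lemma card_separated_subset_bounded:
  fixes K :: "'a::metric_space set"
  assumes "compact K" "0 < \<delta>"
  obtains N :: nat where
    "\<And>C. C \<subseteq> K \<Longrightarrow> (\<And>c c'. c \<in> C \<Longrightarrow> c' \<in> C \<Longrightarrow> c \<noteq> c' \<Longrightarrow> \<delta> \<le> dist c c') \<Longrightarrow>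
       finite C \<and> card C \<le> N"
proof -
  have cover: "K \<subseteq> (\<Union>x\<in>K. ball x (\<delta> / 2))"
  proof
    fix x assume "x \<in> K"
    moreover have "x \<in> ball x (\<delta> / 2)" using assms(2) by simp
    ultimately show "x \<in> (\<Union>x\<in>K. ball x (\<delta> / 2))" by blast
  qed
  obtain F where F: "F \<subseteq> K" "finite F" "K \<subseteq> (\<Union>x\<in>F. ball x (\<delta> / 2))"
    using compactE_image[OF assms(1) open_ball cover] by blast
  have "finite C \<and> card C \<le> card F"
    if C: "C \<subseteq> K" and sep: "\<And>c c'. c \<in> C \<Longrightarrow> c' \<in> C \<Longrightarrow> c \<noteq> c' \<Longrightarrow> \<delta> \<le> dist c c'" for C
  proof -
    have "\<forall>c\<in>C. \<exists>x. x \<in> F \<and> dist x c < \<delta> / 2"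
    proof
      fix c assume "c \<in> C"
      then have "c \<in> (\<Union>x\<in>F. ball x (\<delta> / 2))" using C F(3) by (meson subsetD)
      then show "\<exists>x. x \<in> F \<and> dist x c < \<delta> / 2" by auto
    qed
    then obtain g where g: "\<forall>c\<in>C. g c \<in> F \<and> dist (g c) c < \<delta> / 2"
      by (rule bchoice[THEN exE])
    have inj: "inj_on g C"
    proof (rule inj_onI)
      fix c c' assume cc: "c \<in> C" "c' \<in> C" "g c = g c'"
      have "dist c c' \<le> dist (g c) c + dist (g c) c'"
        by (rule dist_triangle3)
      also have "\<dots> < \<delta>"
        using g cc(1,2) cc(3)[symmetric] by (metis field_sum_of_halves add_strict_mono)
      finally show "c = c'" using sep[OF cc(1,2)] by (meson not_le)
    qed
    have sub: "g ` C \<subseteq> F" using g by (auto simp: image_subset_iff)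
    show ?thesis
      using inj_on_finite[OF inj sub F(2)] card_inj_on_le[OF inj sub F(2)] by simp
  qed
  then show thesis by (rule that)
qed

definition kissing_configuration :: "'a::euclidean_space set \<Rightarrow> bool" where
  "kissing_configuration C \<longleftrightarrow>
     (\<forall>c\<in>C. cball c 1 \<inter> cball 0 1 \<noteq> {} \<and> ball c 1 \<inter> ball 0 1 = {}) \<and>
     (\<forall>c\<in>C. \<forall>c'\<in>C. c \<noteq> c' \<longrightarrow> ball c 1 \<inter> ball c' 1 = {})"

lemma kissing_number_eq_Greatest:
  "kissing_number TYPE('a) =
     (GREATEST k. \<exists>C::'a::euclidean_space set. finite C \<and> card C = k \<and> kissing_configuration C)"
  unfolding kissing_number_def kissing_configuration_def ..

lemma disjoint_unit_balls_iff:
  fixes a b :: "'a::euclidean_space"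
  shows "ball a 1 \<inter> ball b 1 = {} \<longleftrightarrow> 2 \<le> dist a b"
proof
  assume "ball a 1 \<inter> ball b 1 = {}"
  then have "midpoint a b \<notin> ball a 1 \<inter> ball b 1" by blast
  then show "2 \<le> dist a b" by (auto simp: dist_midpoint)
next
  assume "2 \<le> dist a b"
  show "ball a 1 \<inter> ball b 1 = {}"
  proof (rule ccontr)
    assume "ball a 1 \<inter> ball b 1 \<noteq> {}"
    then obtain z where "dist a z < 1" "dist b z < 1" by auto
    then show False
      using dist_triangle[of a b z] dist_commute[of z b] \<open>2 \<le> dist a b\<close> by linarith
  qed
qed

lemma unit_cballs_meet_iff:
  fixes a b :: "'a::euclidean_space"
  shows "cball a 1 \<inter> cball b 1 \<noteq> {} \<longleftrightarrow> dist a b \<le> 2"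
proof
  assume "cball a 1 \<inter> cball b 1 \<noteq> {}"
  then obtain z where "dist a z \<le> 1" "dist b z \<le> 1" by auto
  then show "dist a b \<le> 2" using dist_triangle[of a b z] dist_commute[of z b] by linarith
next
  assume "dist a b \<le> 2"
  then have "midpoint a b \<in> cball a 1 \<inter> cball b 1" by (simp add: dist_midpoint)
  then show "cball a 1 \<inter> cball b 1 \<noteq> {}" by blast
qed

lemma kissing_configuration_iff:
  fixes C :: "'a::euclidean_space set"
  shows "kissing_configuration C \<longleftrightarrow>
           (\<forall>c\<in>C. norm c = 2) \<and> (\<forall>c\<in>C. \<forall>c'\<in>C. c \<noteq> c' \<longrightarrow> 2 \<le> dist c c')"
  unfolding kissing_configuration_def disjoint_unit_balls_iff unit_cballs_meet_iff
  by (auto simp: order_antisym)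

lemma card_le_kissing_number:
  fixes C :: "'a::euclidean_space set"
  assumes "finite C" "kissing_configuration C"
  shows "card C \<le> kissing_number TYPE('a)"
proof -
  obtain N where N: "\<And>C'. C' \<subseteq> cball (0::'a) 2 \<Longrightarrow>
      (\<And>c c'. c \<in> C' \<Longrightarrow> c' \<in> C' \<Longrightarrow> c \<noteq> c' \<Longrightarrow> 2 \<le> dist c c') \<Longrightarrow> finite C' \<and> card C' \<le> N"
    by (rule card_separated_subset_bounded[OF compact_cball, of 2 0]) (simp, blast)
  have "k \<le> N" if "finite C' \<and> card C' = k \<and> kissing_configuration C'" for k and C' :: "'a set"
  proof -
    have "C' \<subseteq> cball 0 2" using that by (auto simp: kissing_configuration_iff)
    then show ?thesis using N[of C'] that by (auto simp: kissing_configuration_iff)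
  qed
  then show ?thesis
    unfolding kissing_number_eq_Greatest using assms by (intro Greatest_le_nat) blast+
qed

lemma kissing_number_ge_2: "2 \<le> kissing_number TYPE('a::euclidean_space)"
proof -
  obtain e :: 'a where e: "e \<in> Basis" using nonempty_Basis by blast
  have four: "norm (2 *\<^sub>R e + 2 *\<^sub>R e) = 4"
    using e by (simp add: scaleR_left_distrib[symmetric])
  then have "2 *\<^sub>R e \<noteq> - 2 *\<^sub>R e"
    by (metis add.inverse_inverse diff_minus_eq_add diff_self norm_zero zero_neq_numeral scaleR_minus_left)
  have "kissing_configuration {2 *\<^sub>R e, - 2 *\<^sub>R e}"
    using e four by (auto simp: kissing_configuration_iff dist_norm norm_minus_commute[of "- _"])
  moreover have "card {2 *\<^sub>R e, - 2 *\<^sub>R e} = 2"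
    using \<open>2 *\<^sub>R e \<noteq> - 2 *\<^sub>R e\<close> by simp
  ultimately show ?thesis by (metis card_le_kissing_number finite.emptyI finite.insertI)
qed

lemma dist_sgn_ge_1:
  fixes a b :: "'a::real_inner"
  assumes "a \<noteq> 0" "b \<noteq> 0" "norm a \<le> norm (a - b)" "norm b \<le> norm (a - b)"
  shows "1 \<le> dist (sgn a) (sgn b)"
proof -
  have na: "norm a > 0" "norm b > 0" using assms by auto
  have e1: "(norm (a - b))^2 = (norm a)^2 + (norm b)^2 - 2 * (a \<bullet> b)"
    by (simp add: power2_norm_eq_inner inner_diff algebra_simps inner_commute)
  have "2 * (a \<bullet> b) \<le> (norm b)^2" "2 * (a \<bullet> b) \<le> (norm a)^2"
    using assms(3,4) e1 by (smt (verit) norm_ge_zero power_mono)+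
  then have ab: "2 * (a \<bullet> b) \<le> norm a * norm b"
    using na by (smt (verit) mult_left_mono mult_right_mono power2_eq_square)
  define u v where "u = sgn a" and "v = sgn b"
  have uu: "u \<bullet> u = 1" "v \<bullet> v = 1"
    using na unfolding u_def v_def by (simp_all add: dot_square_norm norm_sgn)
  have uv: "u \<bullet> v = (a \<bullet> b) / (norm a * norm b)"
    unfolding u_def v_def by (simp add: sgn_div_norm field_simps)
  have "(dist u v)^2 = 2 - 2 * (a \<bullet> b) / (norm a * norm b)"
    unfolding dist_norm power2_norm_eq_inner using uu uv by (simp add: inner_diff inner_commute)
  also have "\<dots> \<ge> 1" using ab na by (simp add: divide_simps)
  finally have "1\<^sup>2 \<le> (dist u v)^2" by simp
  then show ?thesis unfolding u_def v_def by (rule power2_le_imp_le) simp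
qed

section \<open>Power means\<close>

lemma convex_on_powr_nonneg:
  assumes "1 \<le> p"
  shows "convex_on {0..} (\<lambda>x::real. x powr p)"
proof (rule convex_onI)
  fix t x y :: real assume t: "0 < t" "t < 1" and xy: "x \<in> {0..}" "y \<in> {0..}"
  have scaled: "(s * z) powr p \<le> s * z powr p" if "0 \<le> s" "s \<le> 1" "0 \<le> z" for s z :: real
  proof -
    have "s powr p \<le> s" using powr_mono'[of 1 p s] that assms by simp
    then show ?thesis using that by (simp add: powr_mult mult_right_mono)
  qed
  show "((1 - t) *\<^sub>R x + t *\<^sub>R y) powr p \<le> (1 - t) * x powr p + t * y powr p"
  proof (cases "x = 0 \<or> y = 0")
    case True
    then show ?thesis using scaled[of t y] scaled[of "1 - t" x] t xy by auto
  next
    case False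
    then show ?thesis
      using convex_onD[OF powr_convex[OF assms], of t x y] t xy by simp
  qed
qed simp

lemma powr_add_le_convex_combination:
  fixes a b A B p :: real
  assumes p: "1 \<le> p" and ab: "0 \<le> a" "0 \<le> b" and AB: "0 < A" "0 < B"
  shows "(a + b) powr p \<le> (A + B) powr p *
           (A / (A + B) * (a powr p / A powr p) + B / (A + B) * (b powr p / B powr p))"
proof -
  have t: "1 - B / (A + B) = A / (A + B)"
    using AB by (simp add: field_simps)
  have "(a + b) / (A + B) = (1 - B / (A + B)) *\<^sub>R (a / A) + (B / (A + B)) *\<^sub>R (b / B)"
    using AB unfolding t by (simp add: add_divide_distrib)
  then have "((a + b) / (A + B)) powr p \<le> A / (A + B) * (a / A) powr p + B / (A + B) * (b / B) powr p"
    using convex_onD[OF convex_on_powr_nonneg[OF p], of "B / (A + B)" "a / A" "b / B"] ab AB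
    unfolding t by simp
  then show ?thesis
    using ab AB by (simp add: powr_divide field_simps)
qed

definition power_mean :: "real \<Rightarrow> nat \<Rightarrow> (nat \<Rightarrow> real) \<Rightarrow> real" where
  "power_mean p n v = ((1 / real n) * (\<Sum>i<n. v i powr p)) powr (1 / p)"

lemma power_mean_nonneg: "0 \<le> power_mean p n v"
  by (simp add: power_mean_def)

lemma powr_inverse_le_iff:
  fixes x c p :: real
  assumes "0 < p" "0 \<le> x" "0 \<le> c"
  shows "x powr (1 / p) \<le> c \<longleftrightarrow> x \<le> c powr p"
proof
  assume "x powr (1 / p) \<le> c"
  then have "(x powr (1 / p)) powr p \<le> c powr p" using assms by (simp add: powr_mono2)
  then show "x \<le> c powr p" using assms by (simp add: powr_powr)
next
  assume "x \<le> c powr p"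
  then have "x powr (1 / p) \<le> (c powr p) powr (1 / p)" using assms by (simp add: powr_mono2)
  then show "x powr (1 / p) \<le> c" using assms by (simp add: powr_powr)
qed

lemma power_mean_le_iff:
  assumes "0 < p" "0 \<le> c"
  shows "power_mean p n v \<le> c \<longleftrightarrow> (1 / real n) * (\<Sum>i<n. v i powr p) \<le> c powr p"
  unfolding power_mean_def using assms by (simp add: powr_inverse_le_iff sum_nonneg)

lemma power_mean_mono:
  assumes "0 < p" "\<And>i. i < n \<Longrightarrow> 0 \<le> v i" "\<And>i. i < n \<Longrightarrow> v i \<le> w i"
  shows "power_mean p n v \<le> power_mean p n w"
proof -
  have "(\<Sum>i<n. v i powr p) \<le> (\<Sum>i<n. w i powr p)"
    using assms by (intro sum_mono powr_mono2) auto
  then show ?thesis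
    unfolding power_mean_def using assms(1)
    by (intro powr_mono2 mult_left_mono) (simp_all add: sum_nonneg)
qed

lemma power_mean_le_scaled:
  assumes "0 < p" "0 \<le> t" and le: "(\<Sum>i<n. v i powr p) \<le> t * (\<Sum>i<n. w i powr p)"
  shows "power_mean p n v \<le> t powr (1 / p) * power_mean p n w"
proof -
  have "(t powr (1 / p) * power_mean p n w) powr p = t * ((1 / real n) * (\<Sum>i<n. w i powr p))"
    using assms(1,2) by (simp add: power_mean_def powr_mult powr_powr sum_nonneg)
  then show ?thesis
    using assms by (simp add: power_mean_le_iff power_mean_nonneg divide_right_mono)
qed

text \<open>Minkowski's inequality. The means are enlarged by \<open>e/2\<close> so that one can normalise by
  them even when they vanish.\<close>

lemma power_mean_add_le:
  assumes p: "1 \<le> p" and v: "\<And>i. i < n \<Longrightarrow> 0 \<le> v i" and w: "\<And>i. i < n \<Longrightarrow> 0 \<le> w i"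
  shows "power_mean p n (\<lambda>i. v i + w i) \<le> power_mean p n v + power_mean p n w"
proof (rule field_le_epsilon)
  fix e :: real assume "0 < e"
  define A B where "A = power_mean p n v + e / 2" and "B = power_mean p n w + e / 2"
  have AB: "0 < A" "0 < B"
    unfolding A_def B_def using \<open>0 < e\<close> power_mean_nonneg[of p n v] power_mean_nonneg[of p n w]
    by linarith+
  have "power_mean p n v \<le> A" "power_mean p n w \<le> B"
    unfolding A_def B_def using \<open>0 < e\<close> by simp_all
  then have mean_v: "(1 / real n) * (\<Sum>i<n. v i powr p) \<le> A powr p"
    and mean_w: "(1 / real n) * (\<Sum>i<n. w i powr p) \<le> B powr p"
    using p AB by (simp_all add: power_mean_le_iff)
  have "(v i + w i) powr p \<le> (A + B) powr p *
          (A / (A + B) * (v i powr p / A powr p) + B / (A + B) * (w i powr p / B powr p))"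
    if "i < n" for i
    using powr_add_le_convex_combination[OF p v[OF that] w[OF that] AB] .
  then have "(1 / real n) * (\<Sum>i<n. (v i + w i) powr p) \<le> (1 / real n) * (\<Sum>i<n. (A + B) powr p *
      (A / (A + B) * (v i powr p / A powr p) + B / (A + B) * (w i powr p / B powr p)))"
    by (intro mult_left_mono sum_mono) simp_all
  also have "\<dots> = (A + B) powr p *
      (A / (A + B) / A powr p * ((1 / real n) * (\<Sum>i<n. v i powr p))
        + B / (A + B) / B powr p * ((1 / real n) * (\<Sum>i<n. w i powr p)))"
    by (simp add: distrib_left sum.distrib sum_distrib_left mult_ac)
  also have "\<dots> \<le> (A + B) powr p *
      (A / (A + B) / A powr p * A powr p + B / (A + B) / B powr p * B powr p)"
    using mean_v mean_w AB by (intro mult_left_mono add_mono) simp_all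
  also have "\<dots> = (A + B) powr p"
    using AB by (simp add: add_divide_distrib[symmetric])
  finally have "power_mean p n (\<lambda>i. v i + w i) \<le> A + B"
    using p AB by (simp add: power_mean_le_iff)
  then show "power_mean p n (\<lambda>i. v i + w i) \<le> power_mean p n v + power_mean p n w + e"
    unfolding A_def B_def by simp
qed

lemma Min_powr_commute:
  fixes S :: "real set"
  assumes "finite S" "S \<noteq> {}" "\<And>x. x \<in> S \<Longrightarrow> 0 \<le> x" "0 \<le> p"
  shows "Min ((\<lambda>x. x powr p) ` S) = Min S powr p"
proof (rule Min_eqI)
  have "0 \<le> Min S"
    using assms by simp
  show "Min S powr p \<le> y" if y: "y \<in> (\<lambda>x. x powr p) ` S" for y
  proof -
    obtain x where "x \<in> S" "y = x powr p" using y by blast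
    then show ?thesis using assms \<open>0 \<le> Min S\<close> by (simp add: powr_mono2)
  qed
  show "Min S powr p \<in> (\<lambda>x. x powr p) ` S"
    using assms by simp
qed (use assms in simp)

section \<open>Nearest-neighbour distances\<close>

lemma d0_commute: "d0 x y = d0 y x"
  by (simp add: d0_def norm_minus_commute)

lemma d0_triangle: "d0 x z \<le> d0 x y + d0 y z"
proof -
  have "norm (x - z) \<le> norm (x - y) + norm (y - z)"
    using dist_triangle[of x z y] by (simp add: dist_norm)
  moreover have "0 \<le> norm (x - y)" "0 \<le> norm (y - z)"
    by simp_all
  ultimately show ?thesis
    unfolding d0_def min_def by (smt (verit))
qed

lemma set_mset_remove_nth:
  assumes "i < length xs"
  shows "set_mset (mset xs - {#xs ! i#}) = nth xs ` ({..<length xs} - {i})"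
proof -
  have "mset xs - {#xs ! i#} = mset (take i xs @ drop (Suc i) xs)"
    by (subst id_take_nth_drop[OF assms]) simp
  moreover have "set (take i xs) = nth xs ` {0..<i}"
    using assms by (simp add: nth_image)
  moreover have "set (drop (Suc i) xs) = nth xs ` {Suc i..<length xs}"
  proof -
    have shift: "plus (Suc i) ` {0..<length xs - Suc i} = {Suc i..<length xs}"
    proof -
      have "length xs - Suc i + Suc i = length xs"
        using assms by simp
      then show ?thesis
        by (simp only: image_add_atLeastLessThan add_0)
    qed
    have "set (drop (Suc i) xs) = nth (drop (Suc i) xs) ` {0..<length xs - Suc i}"
      using nth_image[of "length (drop (Suc i) xs)" "drop (Suc i) xs"] by simp
    also have "\<dots> = nth xs ` plus (Suc i) ` {0..<length xs - Suc i}"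
      unfolding image_image using assms by (intro image_cong) simp_all
    finally show ?thesis
      unfolding shift .
  qed
  moreover have "{0..<i} \<union> {Suc i..<length xs} = {..<length xs} - {i}"
    using assms by auto
  ultimately show ?thesis by (simp flip: image_Un)
qed

definition nn_dist :: "'a::real_normed_vector list \<Rightarrow> nat \<Rightarrow> real" where
  "nn_dist xs i = Min ((\<lambda>k. d0 (xs ! i) (xs ! k)) ` ({..<length xs} - {i}))"

definition nearest_neighbours :: "'a::real_normed_vector list \<Rightarrow> nat \<Rightarrow> nat set" where
  "nearest_neighbours xs i =
     {k \<in> {..<length xs} - {i}. d0 (xs ! i) (xs ! k) = nn_dist xs i}"

lemma finite_nearest_neighbours [simp]: "finite (nearest_neighbours xs i)"
  by (simp add: nearest_neighbours_def)

lemma nn_dist_le: "k < length xs \<Longrightarrow> k \<noteq> i \<Longrightarrow> nn_dist xs i \<le> d0 (xs ! i) (xs ! k)"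
  unfolding nn_dist_def by (rule Min_le) auto

lemma nearest_neighbours_nonempty:
  assumes "2 \<le> length xs" "i < length xs"
  shows "nearest_neighbours xs i \<noteq> {}"
proof -
  have "(if i = 0 then 1 else 0) \<in> {..<length xs} - {i}"
    using assms by auto
  then have "{..<length xs} - {i} \<noteq> {}"
    by blast
  then have "nn_dist xs i \<in> (\<lambda>k. d0 (xs ! i) (xs ! k)) ` ({..<length xs} - {i})"
    unfolding nn_dist_def by (intro Min_in) auto
  then show ?thesis unfolding nearest_neighbours_def by force
qed

lemma nn_dist_bounds:
  assumes "2 \<le> length xs" "i < length xs"
  shows "0 \<le> nn_dist xs i" "nn_dist xs i \<le> 1"
proof -
  obtain k where "k \<in> nearest_neighbours xs i"
    using nearest_neighbours_nonempty[OF assms] by blast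
  then have "nn_dist xs i = d0 (xs ! i) (xs ! k)"
    by (simp add: nearest_neighbours_def)
  then show "0 \<le> nn_dist xs i" "nn_dist xs i \<le> 1"
    by (simp_all add: d0_def)
qed

lemma nn_stat_mset:
  assumes "0 < p" "2 \<le> length xs"
  shows "nn_stat p (mset xs) = power_mean p (length xs) (nn_dist xs)"
proof -
  define F where "F x = Min ((\<lambda>y. d0 x y powr p) ` set_mset (mset xs - {#x#}))" for x
  have F_nth: "F (xs ! i) = nn_dist xs i powr p" if "i < length xs" for i
  proof -
    have "F (xs ! i) = Min ((\<lambda>t. t powr p) ` (\<lambda>k. d0 (xs ! i) (xs ! k)) ` ({..<length xs} - {i}))"
      using that by (simp add: F_def set_mset_remove_nth image_image)
    also have "\<dots> = nn_dist xs i powr p"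
      unfolding nn_dist_def using assms that nearest_neighbours_nonempty
      by (intro Min_powr_commute) (auto simp: d0_def nearest_neighbours_def)
    finally show ?thesis .
  qed
  have "(\<Sum>x\<in>#mset xs. F x) = sum_list (map F xs)"
    by (metis mset_map sum_mset_sum_list)
  also have "\<dots> = (\<Sum>i<length xs. F (xs ! i))"
    by (simp add: sum_list_sum_nth atLeast0LessThan)
  also have "\<dots> = (\<Sum>i<length xs. nn_dist xs i powr p)"
    by (simp add: F_nth)
  finally have "(\<Sum>x\<in>#mset xs. F x) = (\<Sum>i<length xs. nn_dist xs i powr p)" .
  then show ?thesis
    using assms(2) by (simp add: nn_stat_def power_mean_def F_def)
qed

lemma nn_stat_bounds:
  assumes "0 < p"
  shows "0 \<le> nn_stat p \<xi>" "nn_stat p \<xi> \<le> 1"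
proof -
  obtain xs where xs: "mset xs = \<xi>" using ex_mset by blast
  have "nn_stat p \<xi> \<le> 1"
  proof (cases "2 \<le> length xs")
    case True
    have "(\<Sum>i<length xs. nn_dist xs i powr p) \<le> (\<Sum>i<length xs. 1)"
      using nn_dist_bounds[OF True] assms by (intro sum_mono powr_le1) (auto simp: abs_le_iff)
    then show ?thesis
      using True assms unfolding xs[symmetric] nn_stat_mset[OF assms True]
      by (simp add: power_mean_le_iff divide_le_eq)
  qed (auto simp: nn_stat_def xs[symmetric])
  then show "0 \<le> nn_stat p \<xi>" "nn_stat p \<xi> \<le> 1"
    by (simp_all add: nn_stat_def)
qed

lemma d1_eq_power_mean:
  fixes \<xi> \<eta> :: "'a::real_normed_vector multiset"
  assumes "size \<xi> = size \<eta>" "size \<xi> \<noteq> 0"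
  obtains xs ys where "mset xs = \<xi>" "mset ys = \<eta>"
    "d1 p \<xi> \<eta> = power_mean p (size \<xi>) (\<lambda>i. d0 (xs ! i) (ys ! i))"
proof -
  define f where "f = (\<lambda>(xs, ys). power_mean p (size \<xi>) (\<lambda>i. d0 (xs ! i) (ys ! i :: 'a)))"
  define M where "M = f ` (permutations_of_multiset \<xi> \<times> permutations_of_multiset \<eta>)"
  have "d1 p \<xi> \<eta> = Min M"
    using assms unfolding d1_def M_def f_def power_mean_def permutations_of_multiset_def
    by (auto intro!: arg_cong[where f = Min])
  moreover have "Min M \<in> M"
    unfolding M_def by (intro Min_in) auto
  ultimately show thesis
    using that unfolding M_def f_def permutations_of_multiset_def by auto
qed

lemma d1_nonneg: "0 \<le> d1 p \<xi> \<eta>"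
proof (cases "size \<xi> = size \<eta> \<and> size \<xi> \<noteq> 0")
  case True
  then show ?thesis
    by (metis d1_eq_power_mean power_mean_nonneg)
qed (auto simp: d1_def)

section \<open>Lipschitz continuity of the nearest-neighbour statistic\<close>

definition nn_preimage :: "'a::real_normed_vector list \<Rightarrow> nat \<Rightarrow> nat set" where
  "nn_preimage ys k = {i. i < length ys \<and> nn_dist ys i < 1 \<and> k \<in> nearest_neighbours ys i}"

definition copies :: "'a list \<Rightarrow> nat \<Rightarrow> nat set" where
  "copies ys k = {j. j < length ys \<and> ys ! j = ys ! k}"

lemma finite_nn_preimage [simp]: "finite (nn_preimage ys k)"
  by (simp add: nn_preimage_def)

lemma finite_copies [simp]: "finite (copies ys k)"
  by (simp add: copies_def)

lemma card_nn_preimage_diff_copies_le_kissing_number: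
  fixes ys :: "'a::euclidean_space list"
  shows "card (nn_preimage ys k - copies ys k) \<le> kissing_number TYPE('a)"
proof -
  define E where "E = nn_preimage ys k - copies ys k"
  define c where "c i = 2 *\<^sub>R sgn (ys ! i - ys ! k)" for i
  have E: "i < length ys" "i \<noteq> k" "ys ! i \<noteq> ys ! k" "nn_dist ys i = norm (ys ! i - ys ! k)"
    if "i \<in> E" for i
    using that
    by (auto simp: E_def nn_preimage_def copies_def nearest_neighbours_def d0_def min_def split: if_splits)
  have norm_le: "norm (ys ! i - ys ! k) \<le> norm (ys ! i - ys ! i')"
    if "i \<in> E" "i' \<in> E" "i \<noteq> i'" for i i'
  proof -
    have "norm (ys ! i - ys ! k) \<le> d0 (ys ! i) (ys ! i')"
      using E[OF that(1)] E[OF that(2)] that(3) nn_dist_le[of i' ys i] by simp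
    then show ?thesis by (simp add: d0_def)
  qed
  have sep: "2 \<le> dist (c i) (c i')" if "i \<in> E" "i' \<in> E" "i \<noteq> i'" for i i'
  proof -
    have "1 \<le> dist (sgn (ys ! i - ys ! k)) (sgn (ys ! i' - ys ! k))"
      using E[OF that(1)] E[OF that(2)] norm_le[OF that] norm_le[OF that(2,1)] that(3)
      by (intro dist_sgn_ge_1) (simp_all add: norm_minus_commute)
    then show ?thesis
      by (simp add: c_def dist_norm flip: scaleR_diff_right)
  qed
  have "inj_on c E"
    by (rule inj_onI) (use sep in fastforce)
  moreover have "kissing_configuration (c ` E)"
    using sep E(3) by (auto simp: kissing_configuration_iff c_def norm_sgn)
  ultimately show ?thesis
    using card_le_kissing_number[of "c ` E"] card_image unfolding E_def by fastforce
qed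

lemma sum_inverse_card_nearest_neighbours_copies_le:
  assumes "k < length ys"
  shows "(\<Sum>i \<in> nn_preimage ys k \<inter> copies ys k. 1 / real (card (nearest_neighbours ys i)))
           \<le> (if nn_preimage ys k \<inter> copies ys k = {} then 0 else 1)"
proof -
  define S where "S = copies ys k"
  have "(\<Sum>i \<in> nn_preimage ys k \<inter> S. 1 / real (card (nearest_neighbours ys i)))
      = (\<Sum>i \<in> nn_preimage ys k \<inter> S. 1 / real (card S - 1))"
  proof (rule sum.cong)
    fix i assume i: "i \<in> nn_preimage ys k \<inter> S"
    then have "nn_dist ys i = 0"
      by (auto simp: S_def nn_preimage_def copies_def nearest_neighbours_def d0_def)
    then have "nearest_neighbours ys i = S - {i}"
      using i
      by (auto simp: S_def nn_preimage_def copies_def nearest_neighbours_def d0_def min_def split: if_splits)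
    then show "1 / real (card (nearest_neighbours ys i)) = 1 / real (card S - 1)"
      using i by (simp add: S_def)
  qed simp
  also have "\<dots> \<le> (if nn_preimage ys k \<inter> S = {} then 0 else 1)"
  proof -
    have "nn_preimage ys k \<inter> S \<subseteq> S - {k}"
      by (auto simp: nn_preimage_def nearest_neighbours_def)
    moreover have "k \<in> S"
      using assms by (simp add: S_def copies_def)
    ultimately have "card (nn_preimage ys k \<inter> S) \<le> card S - 1"
      using card_mono[of "S - {k}"] by (simp add: S_def)
    then show ?thesis by (auto simp: divide_le_eq_1)
  qed
  finally show ?thesis unfolding S_def .
qed

lemma sum_inverse_card_nearest_neighbours_other_le:
  fixes ys :: "'a::euclidean_space list"
  shows "(\<Sum>i \<in> nn_preimage ys k - copies ys k. 1 / real (card (nearest_neighbours ys i)))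
           \<le> real (kissing_number TYPE('a)) / card (copies ys k)"
proof -
  have "1 / real (card (nearest_neighbours ys i)) \<le> 1 / card (copies ys k)"
    if "i \<in> nn_preimage ys k - copies ys k" for i
  proof -
    have "copies ys k \<subseteq> nearest_neighbours ys i"
      using that by (auto simp: nn_preimage_def copies_def nearest_neighbours_def)
    moreover have "copies ys k \<noteq> {}"
      using that by (auto simp: nn_preimage_def nearest_neighbours_def copies_def)
    ultimately show ?thesis
      by (simp add: frac_le card_mono card_gt_0_iff)
  qed
  then have "(\<Sum>i \<in> nn_preimage ys k - copies ys k. 1 / real (card (nearest_neighbours ys i)))
      \<le> card (nn_preimage ys k - copies ys k) * (1 / card (copies ys k))"
    by (rule sum_bounded_above)
  also have "\<dots> \<le> real (kissing_number TYPE('a)) * (1 / card (copies ys k))"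
    using card_nn_preimage_diff_copies_le_kissing_number[of ys k] by (intro mult_right_mono) simp_all
  finally show ?thesis
    by simp
qed

text \<open>The at most one unit contributed by the copies of \<open>ys ! k\<close> is absorbed because the kissing
  number is at least 2.\<close>

lemma sum_inverse_card_nearest_neighbours_le:
  fixes ys :: "'a::euclidean_space list"
  assumes "k < length ys"
  shows "(\<Sum>i \<in> nn_preimage ys k. 1 / real (card (nearest_neighbours ys i)))
           \<le> real (kissing_number TYPE('a))"
proof -
  define P S where "P = nn_preimage ys k" and "S = copies ys k"
  define \<tau> where "\<tau> = real (kissing_number TYPE('a))"
  have "k \<in> S" using assms by (simp add: S_def copies_def)
  then have s: "1 \<le> card S" by (metis One_nat_def Suc_leI card_gt_0_iff empty_iff finite_copies S_def)
  have "(if P \<inter> S = {} then 0 else 1) + \<tau> / card S \<le> \<tau>"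
  proof (cases "P \<inter> S = {}")
    case True
    then show ?thesis using s by (simp add: \<tau>_def divide_le_eq mult_le_cancel_left1)
  next
    case False
    then obtain i where "i \<in> P \<inter> S" by blast
    then have "{i, k} \<subseteq> S" "i \<noteq> k"
      using \<open>k \<in> S\<close> by (auto simp: P_def nn_preimage_def nearest_neighbours_def)
    then have "2 \<le> card S" by (metis S_def card_2_iff card_mono finite_copies)
    then have "\<tau> / card S \<le> \<tau> / 2" by (intro divide_left_mono) (simp_all add: \<tau>_def)
    moreover have "2 \<le> \<tau>" using kissing_number_ge_2[where 'a='a] by (simp add: \<tau>_def)
    moreover have "(if P \<inter> S = {} then 0 else 1) = (1::real)" using False by simp
    ultimately show ?thesis by linarith
  qed
  then show ?thesis
    using sum_inverse_card_nearest_neighbours_copies_le[OF assms]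
      sum_inverse_card_nearest_neighbours_other_le[of ys k]
      sum.Int_Diff[OF finite_nn_preimage, of _ ys k "copies ys k"]
    unfolding P_def S_def \<tau>_def by (smt (verit))
qed

lemma sum_min_nearest_powr_le:
  fixes ys :: "'a::euclidean_space list" and \<delta> :: "nat \<Rightarrow> real"
  assumes p: "0 \<le> p" and n: "2 \<le> length ys" and \<delta>: "\<And>k. 0 \<le> \<delta> k"
  shows "(\<Sum>i<length ys. (if nn_dist ys i < 1 then Min (\<delta> ` nearest_neighbours ys i) else 0) powr p)
           \<le> real (kissing_number TYPE('a)) * (\<Sum>k<length ys. \<delta> k powr p)"
proof -
  define N where "N = nearest_neighbours ys"
  define I where "I = {i \<in> {..<length ys}. nn_dist ys i < 1}"
  have min_le_mean: "Min (\<delta> ` N i) powr p \<le> (\<Sum>k\<in>N i. \<delta> k powr p / card (N i))"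
    if "i < length ys" for i
  proof -
    have ne: "N i \<noteq> {}" using nearest_neighbours_nonempty[OF n that] by (simp add: N_def)
    have "Min ((\<lambda>x. x powr p) ` \<delta> ` N i) = Min (\<delta> ` N i) powr p"
      using ne p \<delta> by (intro Min_powr_commute) (auto simp: N_def)
    then have "Min ((\<lambda>k. \<delta> k powr p) ` N i) = Min (\<delta> ` N i) powr p"
      by (simp add: image_image)
    moreover have "card (N i) * Min ((\<lambda>k. \<delta> k powr p) ` N i) \<le> (\<Sum>k\<in>N i. \<delta> k powr p)"
      by (rule sum_bounded_below) (simp add: N_def)
    ultimately show ?thesis
      using ne by (simp add: N_def sum_divide_distrib[symmetric] le_divide_eq card_gt_0_iff mult.commute)
  qed
  have N_eq: "N i = {k \<in> {..<length ys}. k \<in> N i}" for i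
    by (auto simp: N_def nearest_neighbours_def)
  have "(\<Sum>i<length ys. (if nn_dist ys i < 1 then Min (\<delta> ` N i) else 0) powr p)
      = (\<Sum>i\<in>I. Min (\<delta> ` N i) powr p)"
    unfolding I_def sum.inter_filter[OF finite_lessThan] by (intro sum.cong) auto
  also have "\<dots> \<le> (\<Sum>i\<in>I. \<Sum>k\<in>{k \<in> {..<length ys}. k \<in> N i}. \<delta> k powr p / card (N i))"
    using min_le_mean N_eq by (intro sum_mono) (auto simp: I_def)
  also have "\<dots> = (\<Sum>k<length ys. \<Sum>i\<in>{i \<in> I. k \<in> N i}. \<delta> k powr p / card (N i))"
    by (rule sum.swap_restrict) (simp_all add: I_def)
  also have "\<dots> = (\<Sum>k<length ys. \<delta> k powr p * (\<Sum>i \<in> nn_preimage ys k. 1 / card (N i)))"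
    by (intro sum.cong) (auto simp: I_def N_def nn_preimage_def sum_distrib_left intro!: sum.cong)
  also have "\<dots> \<le> (\<Sum>k<length ys. \<delta> k powr p * real (kissing_number TYPE('a)))"
    using sum_inverse_card_nearest_neighbours_le
    by (intro sum_mono mult_left_mono) (auto simp: N_def)
  finally show ?thesis
    unfolding N_def by (simp add: sum_distrib_left mult.commute)
qed

lemma nn_dist_le_matched:
  assumes len: "length xs = length ys" and n: "2 \<le> length ys" and i: "i < length ys"
  defines "\<delta> \<equiv> \<lambda>k. d0 (xs ! k) (ys ! k)"
  shows "nn_dist xs i \<le> nn_dist ys i + \<delta> i
           + (if nn_dist ys i < 1 then Min (\<delta> ` nearest_neighbours ys i) else 0)"
proof (cases "nn_dist ys i < 1")
  case True
  have "Min (\<delta> ` nearest_neighbours ys i) \<in> \<delta> ` nearest_neighbours ys i"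
    using nearest_neighbours_nonempty[OF n i] by simp
  then obtain k where k: "k \<in> nearest_neighbours ys i" "Min (\<delta> ` nearest_neighbours ys i) = \<delta> k"
    by auto
  then have "k < length ys" "k \<noteq> i" "d0 (ys ! i) (ys ! k) = nn_dist ys i"
    by (auto simp: nearest_neighbours_def)
  have "nn_dist xs i \<le> d0 (xs ! i) (xs ! k)"
    using \<open>k < length ys\<close> \<open>k \<noteq> i\<close> len by (intro nn_dist_le) simp_all
  also have "\<dots> \<le> d0 (xs ! i) (ys ! i) + d0 (ys ! i) (ys ! k) + d0 (ys ! k) (xs ! k)"
    using d0_triangle[of "xs ! i" "xs ! k" "ys ! i"] d0_triangle[of "ys ! i" "xs ! k" "ys ! k"]
    by simp
  finally show ?thesis
    using True k \<open>d0 (ys ! i) (ys ! k) = nn_dist ys i\<close> by (simp add: \<delta>_def d0_commute)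
next
  case False
  moreover have "nn_dist xs i \<le> 1" "0 \<le> \<delta> i"
    using nn_dist_bounds(2)[of xs i] len n i by (simp_all add: \<delta>_def d0_def)
  ultimately show ?thesis
    by simp
qed

lemma power_mean_nn_dist_le:
  fixes xs ys :: "'a::euclidean_space list"
  assumes p: "1 \<le> p" and len: "length xs = length ys" and n: "2 \<le> length ys"
  shows "power_mean p (length ys) (nn_dist xs) \<le> power_mean p (length ys) (nn_dist ys)
           + (1 + real (kissing_number TYPE('a)) powr (1 / p))
             * power_mean p (length ys) (\<lambda>i. d0 (xs ! i) (ys ! i))"
proof -
  define m where "m = length ys"
  define \<delta> where "\<delta> = (\<lambda>i. d0 (xs ! i) (ys ! i))"
  define g where "g i = (if nn_dist ys i < 1 then Min (\<delta> ` nearest_neighbours ys i) else 0)" for i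
  have \<delta>: "0 \<le> \<delta> i" for i by (simp add: \<delta>_def d0_def)
  have g: "0 \<le> g i" if "i < m" for i
    using nearest_neighbours_nonempty[OF n] that \<delta> by (simp add: g_def m_def)
  have nn: "0 \<le> nn_dist zs i" if "2 \<le> length zs" "i < length zs" for zs :: "'a list" and i
    using nn_dist_bounds[OF that] by simp
  have "nn_dist xs i \<le> nn_dist ys i + \<delta> i + g i" if "i < m" for i
    using nn_dist_le_matched[OF len n, of i] that unfolding m_def g_def \<delta>_def by simp
  then have "power_mean p m (nn_dist xs) \<le> power_mean p m (\<lambda>i. (nn_dist ys i + \<delta> i) + g i)"
    using p n len nn by (intro power_mean_mono) (simp_all add: m_def)
  also have "\<dots> \<le> power_mean p m (\<lambda>i. nn_dist ys i + \<delta> i) + power_mean p m g"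
    using p n nn \<delta> g by (intro power_mean_add_le) (simp_all add: m_def add_nonneg_nonneg)
  also have "\<dots> \<le> power_mean p m (nn_dist ys) + power_mean p m \<delta> + power_mean p m g"
    using p n nn \<delta> power_mean_add_le[of p m "nn_dist ys" \<delta>] by (simp add: m_def)
  also have "power_mean p m g \<le> real (kissing_number TYPE('a)) powr (1 / p) * power_mean p m \<delta>"
    using p sum_min_nearest_powr_le[OF _ n \<delta>, of p]
    by (intro power_mean_le_scaled) (simp_all add: g_def m_def)
  finally show ?thesis
    by (simp add: m_def \<delta>_def algebra_simps)
qed

lemma nn_stat_lipschitz:
  fixes \<xi> \<eta> :: "'a::euclidean_space multiset"
  assumes p: "1 \<le> p"
  shows "\<bar>nn_stat p \<xi> - nn_stat p \<eta>\<bar> \<le> (1 + real (kissing_number TYPE('a)) powr (1 / p)) * d1 p \<xi> \<eta>"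
proof -
  define L where "L = 1 + real (kissing_number TYPE('a)) powr (1 / p)"
  have L: "1 \<le> L" by (simp add: L_def)
  consider "size \<xi> \<noteq> size \<eta>" | "size \<xi> = size \<eta>" "size \<xi> < 2" | "size \<xi> = size \<eta>" "2 \<le> size \<xi>"
    by linarith
  then have "\<bar>nn_stat p \<xi> - nn_stat p \<eta>\<bar> \<le> L * d1 p \<xi> \<eta>"
  proof cases
    case 1
    then show ?thesis
      using nn_stat_bounds[of p \<xi>] nn_stat_bounds[of p \<eta>] p L by (simp add: d1_def)
  next
    case 2
    then show ?thesis
      using d1_nonneg[of p \<xi> \<eta>] L by (simp add: nn_stat_def)
  next
    case 3
    then obtain xs ys where xs: "mset xs = \<xi>" and ys: "mset ys = \<eta>"
      and d1: "d1 p \<xi> \<eta> = power_mean p (size \<xi>) (\<lambda>i. d0 (xs ! i) (ys ! i))"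
      by (metis d1_eq_power_mean not_numeral_le_zero)
    have len: "length xs = length ys" "2 \<le> length ys"
      using 3 xs ys by auto
    have "(\<lambda>i. d0 (ys ! i) (xs ! i)) = (\<lambda>i. d0 (xs ! i) (ys ! i))"
      by (simp add: d0_commute)
    then show ?thesis
      using power_mean_nn_dist_le[OF p len] power_mean_nn_dist_le[OF p len(1)[symmetric]] len p d1
      unfolding xs[symmetric] ys[symmetric] L_def
      by (simp add: nn_stat_mset abs_le_iff)
  qed
  then show ?thesis unfolding L_def .
qed

theorem proposition2:
  fixes X :: "(real ^ 'n) set" and p :: real
  assumes "compact X" and "1 \<le> p"
  shows "(\<forall>\<xi> \<eta>. set_mset \<xi> \<subseteq> X \<longrightarrow> set_mset \<eta> \<subseteq> X \<longrightarrow>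
            \<bar>nn_stat p \<xi> - nn_stat p \<eta>\<bar>
              \<le> 2 * (2 * real (kissing_number TYPE(real ^ 'n)) + 1) powr (1 / p) * d1 p \<xi> \<eta>)
       \<and> (p = 1 \<longrightarrow> (\<forall>\<xi> \<eta>. set_mset \<xi> \<subseteq> X \<longrightarrow> set_mset \<eta> \<subseteq> X \<longrightarrow>
            \<bar>nn_stat p \<xi> - nn_stat p \<eta>\<bar>
              \<le> (real (kissing_number TYPE(real ^ 'n)) + 1) * d1 p \<xi> \<eta>))"
proof -
  define \<tau> where "\<tau> = real (kissing_number TYPE(real ^ 'n))"
  have "1 \<le> (2 * \<tau> + 1) powr (1 / p)" "\<tau> powr (1 / p) \<le> (2 * \<tau> + 1) powr (1 / p)"
    using assms(2) by (auto simp: \<tau>_def intro: ge_one_powr_ge_zero powr_mono2)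
  then have "1 + \<tau> powr (1 / p) \<le> 2 * (2 * \<tau> + 1) powr (1 / p)"
    by linarith
  then have "\<bar>nn_stat p \<xi> - nn_stat p \<eta>\<bar> \<le> 2 * (2 * \<tau> + 1) powr (1 / p) * d1 p \<xi> \<eta>"
    for \<xi> \<eta> :: "(real ^ 'n) multiset"
    using nn_stat_lipschitz[OF assms(2), of \<xi> \<eta>] d1_nonneg[of p \<xi> \<eta>]
    unfolding \<tau>_def by (smt (verit) mult_right_mono)
  moreover have "p = 1 \<Longrightarrow> \<bar>nn_stat p \<xi> - nn_stat p \<eta>\<bar> \<le> (\<tau> + 1) * d1 p \<xi> \<eta>"
    for \<xi> \<eta> :: "(real ^ 'n) multiset"
    using nn_stat_lipschitz[OF assms(2), of \<xi> \<eta>] by (simp add: \<tau>_def add.commute)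
  ultimately show ?thesis
    unfolding \<tau>_def by blast
qed

end
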